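(* Let $N=\{1,\dots,n\}$ with $n\ge 2$ and $\mathcal{D}=\mathbb{R}^n_+$. A rule $R:\mathcal{D}\to\mathbb{R}^n_+$ satisfies scale invariance, downstream impartiality, upstream invariance, and equal treatment of equal source inflows if and only if it is a compromise rule, i.e. there exists $\lambda\in[0,1]$ such that for each $e\in\mathcal{D}$, $R(e)=\lambda R^{NT}(e)+(1-\lambda)R^{EFT}(e)$.
   Context: Agents $1,\dots,n$ are located along a linear river, lower index meaning more upstream; agent $i$ has river inflow $e_i\ge 0$, and $e=(e_1,\dots,e_n)\in\mathcal{D}=\mathbb{R}^n_+$. An allocation for $e$ is $x\in\mathbb{R}^n_+$ with $\sum_{i=1}^n x_i=\sum_{i=1}^n e_i$ and $\sum_{i=1}^k x_i\le\sum_{i=1}^k e_i$ for each $k=1,\dots,n-1$. A rule is a map $R:\mathcal{D}\to\mathbb{R}^n_+$ assigning to each $e$ an allocation $R(e)$ for $e$. No-transfer rule: $R^{NT}_i(e)=e_i$ for all $i$. Egalitarian full-transfer rule: $R^{EFT}_i(e)=\sum_{j<i}\frac{e_j}{n-j}$ for $i=1,\dots,n-1$ (so $R^{EFT}_1(e)=0$), and $R^{EFT}_n(e)=\sum_{j<n}\frac{e_j}{n-j}+e_n$. For $e\in\mathcal{D}$ with $e_k>0$ for some $k\le n-1$, its source is $s(e)=\min\{k\in\{1,\dots,n-1\}:e_k>0\}$. Axioms: Scale invariance: for each $e\in\mathcal{D}$ and each $\gamma\in\mathbb{R}_+$, $R(\gamma e)=\gamma R(e)$. Upstream invariance: for each $e,e'\in\mathcal{D}$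 such that $e_i<e'_i$ for some $i\in N$ and $e_j=e'_j$ for all $j\ne i$, we have $R_k(e)=R_k(e')$ for each $k<i$. Downstream impartiality: for each $e,e'\in\mathcal{D}$ such that $e_i<e'_i$ for some $i\in N$ and $e_j=e'_j$ for all $j\ne i$, and for each $k,l>i$ with $e_k=e_l$, we have $R_k(e')-R_k(e)=R_l(e')-R_l(e)$. Equal treatment of equal source inflows: for each $e,e'\in\mathcal{D}$ (with sources defined) such that $e_{s(e)}=e'_{s(e')}$, $R_{s(e)}(e)=R_{s(e')}(e')$. *)

theory Defs
  imports Main Complex_Main
begin

text \<open>Agents are 1..n; an inflow profile is a function nat => real that is
nonnegative on {1..n} and zero outside (canonical representation of R^n_+).\<close>

definition dom_D :: "nat \<Rightarrow> (nat \<Rightarrow> real) set" where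
  "dom_D n = {e. (\<forall>i\<in>{1..n}. 0 \<le> e i) \<and> (\<forall>i. i \<notin> {1..n} \<longrightarrow> e i = 0)}"

definition is_allocation :: "nat \<Rightarrow> (nat \<Rightarrow> real) \<Rightarrow> (nat \<Rightarrow> real) \<Rightarrow> bool" where
  "is_allocation n e x \<longleftrightarrow>
     (\<forall>i\<in>{1..n}. 0 \<le> x i) \<and>
     (\<Sum>i=1..n. x i) = (\<Sum>i=1..n. e i) \<and>
     (\<forall>k\<in>{1..n-1}. (\<Sum>i=1..k. x i) \<le> (\<Sum>i=1..k. e i))"

definition is_rule :: "nat \<Rightarrow> ((nat \<Rightarrow> real) \<Rightarrow> (nat \<Rightarrow> real)) \<Rightarrow> bool" where
  "is_rule n R \<longleftrightarrow> (\<forall>e\<in>dom_D n. is_allocation n e (R e))"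

definition R_NT :: "(nat \<Rightarrow> real) \<Rightarrow> nat \<Rightarrow> real" where
  "R_NT e i = e i"

definition R_EFT :: "nat \<Rightarrow> (nat \<Rightarrow> real) \<Rightarrow> nat \<Rightarrow> real" where
  "R_EFT n e i = (\<Sum>j\<in>{1..<i}. e j / (real n - real j)) + (if i = n then e n else 0)"

definition has_source :: "nat \<Rightarrow> (nat \<Rightarrow> real) \<Rightarrow> bool" where
  "has_source n e \<longleftrightarrow> (\<exists>k\<in>{1..n-1}. 0 < e k)"

definition source :: "nat \<Rightarrow> (nat \<Rightarrow> real) \<Rightarrow> nat" where
  "source n e = (LEAST k. k \<in> {1..n-1} \<and> 0 < e k)"

definition scale_invariant :: "nat \<Rightarrow> ((nat \<Rightarrow> real) \<Rightarrow> (nat \<Rightarrow> real)) \<Rightarrow> bool" where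
  "scale_invariant n R \<longleftrightarrow>
     (\<forall>e\<in>dom_D n. \<forall>\<gamma>::real. 0 \<le> \<gamma> \<longrightarrow>
        (\<forall>k\<in>{1..n}. R (\<lambda>i. \<gamma> * e i) k = \<gamma> * R e k))"

definition upstream_invariant :: "nat \<Rightarrow> ((nat \<Rightarrow> real) \<Rightarrow> (nat \<Rightarrow> real)) \<Rightarrow> bool" where
  "upstream_invariant n R \<longleftrightarrow>
     (\<forall>e\<in>dom_D n. \<forall>e'\<in>dom_D n. \<forall>i\<in>{1..n}.
        e i < e' i \<and> (\<forall>j\<in>{1..n}. j \<noteq> i \<longrightarrow> e j = e' j) \<longrightarrow>
        (\<forall>k\<in>{1..n}. k < i \<longrightarrow> R e k = R e' k))"

definition downstream_impartial :: "nat \<Rightarrow> ((nat \<Rightarrow> real) \<Rightarrow> (nat \<Rightarrow> real)) \<Rightarrow> bool" where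
  "downstream_impartial n R \<longleftrightarrow>
     (\<forall>e\<in>dom_D n. \<forall>e'\<in>dom_D n. \<forall>i\<in>{1..n}.
        e i < e' i \<and> (\<forall>j\<in>{1..n}. j \<noteq> i \<longrightarrow> e j = e' j) \<longrightarrow>
        (\<forall>k\<in>{1..n}. \<forall>l\<in>{1..n}. i < k \<and> i < l \<and> e k = e l \<longrightarrow>
            R e' k - R e k = R e' l - R e l))"

definition equal_treatment_source :: "nat \<Rightarrow> ((nat \<Rightarrow> real) \<Rightarrow> (nat \<Rightarrow> real)) \<Rightarrow> bool" where
  "equal_treatment_source n R \<longleftrightarrow>
     (\<forall>e\<in>dom_D n. \<forall>e'\<in>dom_D n. has_source n e \<and> has_source n e' \<and>
        e (source n e) = e' (source n e') \<longrightarrow>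
        R e (source n e) = R e' (source n e'))"

definition compromise_rule :: "nat \<Rightarrow> ((nat \<Rightarrow> real) \<Rightarrow> (nat \<Rightarrow> real)) \<Rightarrow> bool" where
  "compromise_rule n R \<longleftrightarrow>
     (\<exists>lam::real. 0 \<le> lam \<and> lam \<le> 1 \<and>
        (\<forall>e\<in>dom_D n. \<forall>i\<in>{1..n}. R e i = lam * R_NT e i + (1 - lam) * R_EFT n e i))"

end

theory Submission
  imports Defs
begin

(* A compromise rule satisfies the four axioms by direct computation.  Conversely, put
   lam := R_1(u) for the unit inflow u at the most upstream agent; scale invariance and
   equal treatment of equal source inflows give R_s(e) = lam * e_s at the source s of e.
   The deviation D = R - C_lam from the compromise rule C_lam is again scale invariant,
   upstream invariant and downstream impartial, sums to zero, and vanishes at sources.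
   D_k = 0 follows by induction on k: by upstream invariance D_k(e) depends only on
   e_1, ..., e_k, so the inflows of agents k..n may all be set to e_k.  On profiles with
   such a flat tail, changing the inflow of an agent above k shifts D_l by the same amount
   for every l >= k (downstream impartiality), and does not change D_j for j < k
   (induction hypothesis), so balance forces the shift to vanish.  This reduces D_k(e) to
   a profile that is zero above k, where k is the source (or the profile is zero).  The
   last agent is settled by balance. *)

section \<open>Inflow profiles and sources\<close>

lemma dom_D_nonneg: "e \<in> dom_D n \<Longrightarrow> 0 \<le> e i"
  unfolding dom_D_def by (cases "i \<in> {1..n}") auto

lemma dom_D_outside: "e \<in> dom_D n \<Longrightarrow> i \<notin> {1..n} \<Longrightarrow> e i = 0"
  by (simp add: dom_D_def)

lemma dom_D_update: "e \<in> dom_D n \<Longrightarrow> i \<in> {1..n} \<Longrightarrow> 0 \<le> v \<Longrightarrow> e(i := v) \<in> dom_D n"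
  by (simp add: dom_D_def)

lemma dom_D_scale: "e \<in> dom_D n \<Longrightarrow> 0 \<le> \<gamma> \<Longrightarrow> (\<lambda>i. \<gamma> * e i) \<in> dom_D n"
  by (simp add: dom_D_def)

lemma source_in_range: "has_source n e \<Longrightarrow> source n e \<in> {1..n-1}"
  unfolding has_source_def source_def by (metis (no_types, lifting) LeastI)

lemma source_pos: "has_source n e \<Longrightarrow> 0 < e (source n e)"
  unfolding has_source_def source_def by (metis (no_types, lifting) LeastI)

lemma zero_below_source:
  assumes "e \<in> dom_D n" "has_source n e" "j \<in> {1..<source n e}"
  shows "e j = 0"
proof -
  have "j \<in> {1..n-1}" using assms(3) source_in_range[OF assms(2)] by auto
  moreover have "\<not> (j \<in> {1..n-1} \<and> 0 < e j)"
    using assms(3) not_less_Least unfolding source_def by auto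
  ultimately have "\<not> 0 < e j" by blast
  with dom_D_nonneg[OF assms(1), of j] show ?thesis by linarith
qed

lemma source_eqI:
  assumes "k \<in> {1..n-1}" "0 < e k" "\<forall>j\<in>{1..<k}. e j = 0"
  shows "has_source n e" and "source n e = k"
proof -
  show "has_source n e" using assms(1,2) unfolding has_source_def by blast
  show "source n e = k" unfolding source_def
    by (rule Least_equality) (use assms in \<open>auto simp: not_less[symmetric]\<close>)
qed

section \<open>Compromise rules\<close>

definition R_compromise :: "nat \<Rightarrow> real \<Rightarrow> (nat \<Rightarrow> real) \<Rightarrow> nat \<Rightarrow> real" where
  "R_compromise n lam e i = lam * R_NT e i + (1 - lam) * R_EFT n e i"

lemma sum_triangle:
  "(\<Sum>i=1..m. \<Sum>j=1..<i. f j) = (\<Sum>j=1..<m. of_nat (m - j) * (f j :: 'a :: comm_semiring_1))"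
proof (induction m)
  case (Suc m)
  have "(\<Sum>j=1..<Suc m. of_nat (Suc m - j) * f j) = (\<Sum>j=1..<Suc m. of_nat (m - j) * f j + f j)"
    by (rule sum.cong) (auto simp: Suc_diff_le algebra_simps)
  also have "\<dots> = (\<Sum>j=1..<m. of_nat (m - j) * f j) + (\<Sum>j=1..<Suc m. f j)"
    by (cases "m = 0") (simp_all add: sum.distrib)
  finally show ?case using Suc by (simp add: add.commute)
qed simp

lemma sum_R_EFT: "(\<Sum>i=1..n. R_EFT n e i) = (\<Sum>i=1..n. e i)"
proof (cases "n = 0")
  case False
  then have "1 \<le> n" by simp
  have "(\<Sum>i=1..n. R_EFT n e i) = (\<Sum>i=1..n. \<Sum>j=1..<i. e j / (real n - real j)) + e n"
    using \<open>1 \<le> n\<close> by (simp add: R_EFT_def sum.distrib)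
  also have "(\<Sum>i=1..n. \<Sum>j=1..<i. e j / (real n - real j)) = (\<Sum>j=1..<n. e j)"
    unfolding sum_triangle by (rule sum.cong) auto
  finally show ?thesis
    using \<open>1 \<le> n\<close> by (simp add: sum.atLeastLessThan_Suc flip: atLeastLessThanSuc_atLeastAtMost)
qed simp

lemma sum_R_compromise: "(\<Sum>i=1..n. R_compromise n lam e i) = (\<Sum>i=1..n. e i)"
proof -
  have "(\<Sum>i=1..n. R_compromise n lam e i) = lam * (\<Sum>i=1..n. e i) + (1 - lam) * (\<Sum>i=1..n. R_EFT n e i)"
    by (simp add: R_compromise_def R_NT_def sum.distrib sum_distrib_left)
  then show ?thesis using sum_R_EFT[of n e] by (simp add: algebra_simps)
qed

lemma R_compromise_upstream:
  assumes "k < i" "\<forall>j\<in>{1..n}. j \<noteq> i \<longrightarrow> e j = e' j" "k \<in> {1..n}"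
  shows "R_compromise n lam e k = R_compromise n lam e' k"
  using assms unfolding R_compromise_def R_NT_def R_EFT_def by (auto intro!: sum.cong)

lemma R_compromise_downstream:
  assumes "i < k" "\<forall>j\<in>{1..n}. j \<noteq> i \<longrightarrow> e j = e' j" "i \<in> {1..n}" "k \<in> {1..n}"
  shows "R_compromise n lam e' k - R_compromise n lam e k = (1 - lam) * (e' i - e i) / (real n - real i)"
proof -
  have "(\<Sum>j=1..<k. e' j / (real n - real j)) - (\<Sum>j=1..<k. e j / (real n - real j))
      = (\<Sum>j=1..<k. if j = i then (e' i - e i) / (real n - real i) else 0)"
    unfolding sum_subtractf[symmetric] using assms by (intro sum.cong) (auto simp: diff_divide_distrib)
  then show ?thesis
    using assms by (simp add: R_compromise_def R_NT_def R_EFT_def algebra_simps)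
qed

lemma R_compromise_source:
  assumes "e \<in> dom_D n" "has_source n e"
  shows "R_compromise n lam e (source n e) = lam * e (source n e)"
proof -
  have "source n e \<noteq> n" using source_in_range[OF assms(2)] by auto
  then have "R_EFT n e (source n e) = 0"
    using zero_below_source[OF assms] by (simp add: R_EFT_def)
  then show ?thesis by (simp add: R_compromise_def R_NT_def)
qed

lemma scale_invariant_R_compromise: "scale_invariant n (R_compromise n lam)"
  by (simp add: scale_invariant_def R_compromise_def R_NT_def R_EFT_def sum_distrib_left algebra_simps)

lemma upstream_invariant_R_compromise: "upstream_invariant n (R_compromise n lam)"
  unfolding upstream_invariant_def using R_compromise_upstream by auto

lemma downstream_impartial_R_compromise: "downstream_impartial n (R_compromise n lam)"
  unfolding downstream_impartial_def using R_compromise_downstream by auto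

lemma equal_treatment_source_R_compromise: "equal_treatment_source n (R_compromise n lam)"
  unfolding equal_treatment_source_def using R_compromise_source by auto

section \<open>Reformulations of the axioms\<close>

lemma scale_invariantD:
  assumes "scale_invariant n R" "e \<in> dom_D n" "0 \<le> \<gamma>" "k \<in> {1..n}"
  shows "R (\<lambda>i. \<gamma> * e i) k = \<gamma> * R e k"
  using assms unfolding scale_invariant_def by blast

lemma scale_invariant_zero:
  assumes "scale_invariant n R" "k \<in> {1..n}"
  shows "R (\<lambda>_. 0) k = 0"
proof -
  have "(\<lambda>_. 0) \<in> dom_D n" by (simp add: dom_D_def)
  from scale_invariantD[OF assms(1) this order_refl assms(2)] show ?thesis by simp
qed

lemma equal_treatment_sourceD:
  assumes "equal_treatment_source n R" "e \<in> dom_D n" "e' \<in> dom_D n"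
    "has_source n e" "has_source n e'" "e (source n e) = e' (source n e')"
  shows "R e (source n e) = R e' (source n e')"
  using assms unfolding equal_treatment_source_def by blast

lemma upstream_invariantD:
  assumes "upstream_invariant n R" "e \<in> dom_D n" "e' \<in> dom_D n" "i \<in> {1..n}"
    "e i < e' i" "\<forall>j\<in>{1..n}. j \<noteq> i \<longrightarrow> e j = e' j" "k \<in> {1..n}" "k < i"
  shows "R e k = R e' k"
  using assms unfolding upstream_invariant_def by blast

lemma downstream_impartialD:
  assumes "downstream_impartial n R" "e \<in> dom_D n" "e' \<in> dom_D n" "i \<in> {1..n}"
    "e i < e' i" "\<forall>j\<in>{1..n}. j \<noteq> i \<longrightarrow> e j = e' j"
    "k \<in> {1..n}" "l \<in> {1..n}" "i < k" "i < l" "e k = e l"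
  shows "R e' k - R e k = R e' l - R e l"
  using assms unfolding downstream_impartial_def by blast

lemma scale_invariant_diff:
  "scale_invariant n R \<Longrightarrow> scale_invariant n R' \<Longrightarrow> scale_invariant n (\<lambda>e i. R e i - R' e i)"
  by (simp add: scale_invariant_def right_diff_distrib)

lemma upstream_invariant_diff:
  "upstream_invariant n R \<Longrightarrow> upstream_invariant n R' \<Longrightarrow> upstream_invariant n (\<lambda>e i. R e i - R' e i)"
  unfolding upstream_invariant_def by simp

lemma downstream_impartial_diff:
  assumes "downstream_impartial n R" "downstream_impartial n R'"
  shows "downstream_impartial n (\<lambda>e i. R e i - R' e i)"
  unfolding downstream_impartial_def
proof (intro ballI impI)
  fix e e' i k l
  assume "e \<in> dom_D n" "e' \<in> dom_D n" "i \<in> {1..n}" "k \<in> {1..n}" "l \<in> {1..n}"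
    "e i < e' i \<and> (\<forall>j\<in>{1..n}. j \<noteq> i \<longrightarrow> e j = e' j)" "i < k \<and> i < l \<and> e k = e l"
  then have "R e' k - R e k = R e' l - R e l" "R' e' k - R' e k = R' e' l - R' e l"
    using downstream_impartialD[OF assms(1)] downstream_impartialD[OF assms(2)] by blast+
  then show "R e' k - R' e' k - (R e k - R' e k) = R e' l - R' e' l - (R e l - R' e l)"
    by simp
qed

lemma upstream_invariant_update:
  assumes UI: "upstream_invariant n R" and p: "p \<in> dom_D n" "p(i := v) \<in> dom_D n"
    and i: "i \<in> {1..n}" and k: "k \<in> {1..n}" "k < i"
  shows "R (p(i := v)) k = R p k"
proof -
  have agree: "\<forall>j\<in>{1..n}. j \<noteq> i \<longrightarrow> p j = (p(i := v)) j"
    and agree': "\<forall>j\<in>{1..n}. j \<noteq> i \<longrightarrow> (p(i := v)) j = p j" by simp_all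
  consider "p i < (p(i := v)) i" | "(p(i := v)) i < p i" | "v = p i" by fastforce
  then show ?thesis
  proof cases
    case 1
    from upstream_invariantD[OF UI p i 1 agree k] show ?thesis by (rule sym)
  next
    case 2
    from upstream_invariantD[OF UI p(2,1) i 2 agree' k] show ?thesis .
  qed simp
qed

lemma downstream_impartial_update:
  assumes DI: "downstream_impartial n R" and p: "p \<in> dom_D n" "p(i := v) \<in> dom_D n"
    and i: "i \<in> {1..n}" and kl: "k \<in> {1..n}" "l \<in> {1..n}" "i < k" "i < l" and "p k = p l"
  shows "R (p(i := v)) k - R p k = R (p(i := v)) l - R p l"
proof -
  have agree: "\<forall>j\<in>{1..n}. j \<noteq> i \<longrightarrow> p j = (p(i := v)) j"
    and agree': "\<forall>j\<in>{1..n}. j \<noteq> i \<longrightarrow> (p(i := v)) j = p j" by simp_all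
  have eq_kl': "(p(i := v)) k = (p(i := v)) l" using \<open>p k = p l\<close> kl by simp
  consider "p i < (p(i := v)) i" | "(p(i := v)) i < p i" | "v = p i" by fastforce
  then show ?thesis
  proof cases
    case 1
    from downstream_impartialD[OF DI p i 1 agree kl \<open>p k = p l\<close>] show ?thesis .
  next
    case 2
    from downstream_impartialD[OF DI p(2,1) i 2 agree' kl eq_kl'] show ?thesis by linarith
  qed simp
qed

lemma rule_axioms_cong:
  assumes agree: "\<forall>e\<in>dom_D n. \<forall>i\<in>{1..n}. R e i = R' e i"
  shows "scale_invariant n R \<longleftrightarrow> scale_invariant n R'"
    and "downstream_impartial n R \<longleftrightarrow> downstream_impartial n R'"
    and "upstream_invariant n R \<longleftrightarrow> upstream_invariant n R'"
    and "equal_treatment_source n R \<longleftrightarrow> equal_treatment_source n R'"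
proof -
  show "scale_invariant n R \<longleftrightarrow> scale_invariant n R'"
    unfolding scale_invariant_def using agree dom_D_scale by simp
  show "downstream_impartial n R \<longleftrightarrow> downstream_impartial n R'"
    unfolding downstream_impartial_def using agree by simp
  show "upstream_invariant n R \<longleftrightarrow> upstream_invariant n R'"
    unfolding upstream_invariant_def using agree by simp
  have "source n e \<in> {1..n}" if "has_source n e" for e
    using source_in_range[OF that] by auto
  then show "equal_treatment_source n R \<longleftrightarrow> equal_treatment_source n R'"
    unfolding equal_treatment_source_def using agree by simp
qed

section \<open>Rules satisfying the axioms are compromise rules\<close>

lemma eq_by_coordinate_updates:
  assumes "finite S"
    and closed: "\<And>p p' x. p \<in> P \<Longrightarrow> p' \<in> P \<Longrightarrow> x \<in> S \<Longrightarrow> p(x := p' x) \<in> P"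
    and step: "\<And>p x v. p \<in> P \<Longrightarrow> p(x := v) \<in> P \<Longrightarrow> x \<in> S \<Longrightarrow> Q (p(x := v)) = Q p"
    and "p \<in> P" "p' \<in> P" "\<forall>j. j \<notin> S \<longrightarrow> p j = p' j"
  shows "Q p = Q p'"
  using assms
proof (induction S arbitrary: p rule: finite_induct)
  case empty
  then have "p = p'" by auto
  then show ?case by simp
next
  case (insert x S)
  have p'': "p(x := p' x) \<in> P" using insert.prems by blast
  have "Q p = Q (p(x := p' x))"
    using insert.prems(2)[of p x "p' x"] insert.prems(3) p'' by (simp add: fun_upd_def)
  also have "\<dots> = Q p'"
    by (rule insert.IH) (use insert.prems p'' in auto)
  finally show ?case .
qed

lemma upstream_invariant_eq_if_eq_upto:
  assumes UI: "upstream_invariant n R" and e: "e \<in> dom_D n" "e' \<in> dom_D n"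
    and k: "k \<in> {1..n}" and agree: "\<forall>j\<le>k. e j = e' j"
  shows "R e k = R e' k"
proof (rule eq_by_coordinate_updates[where S = "{k<..n}" and P = "dom_D n" and Q = "\<lambda>p. R p k"])
  show "p(x := p' x) \<in> dom_D n" if "p \<in> dom_D n" "p' \<in> dom_D n" "x \<in> {k<..n}" for p p' x
    using that k dom_D_update dom_D_nonneg by auto
  show "R (p(x := v)) k = R p k" if "p \<in> dom_D n" "p(x := v) \<in> dom_D n" "x \<in> {k<..n}" for p x v
    using upstream_invariant_update[OF UI that(1,2)] that(3) k by auto
  show "\<forall>j. j \<notin> {k<..n} \<longrightarrow> e j = e' j"
    using agree dom_D_outside[OF e(1)] dom_D_outside[OF e(2)] by (metis atLeastAtMost_iff greaterThanAtMost_iff not_le)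
qed (use e in auto)

lemma downstream_impartial_balanced_update_eq:
  assumes DI: "downstream_impartial n D"
    and balanced: "\<forall>p\<in>dom_D n. (\<Sum>i=1..n. D p i) = 0"
    and below: "\<forall>p\<in>dom_D n. \<forall>j\<in>{1..<k}. D p j = 0"
    and p: "p \<in> dom_D n" "p(x := v) \<in> dom_D n"
    and x: "x \<in> {1..<k}" and k: "k \<in> {1..n}" and flat: "\<forall>j\<in>{k..n}. p j = c"
  shows "D (p(x := v)) k = D p k"
proof -
  define \<delta> where "\<delta> l = D (p(x := v)) l - D p l" for l
  have x': "x \<in> {1..n}" "x < k" using x k by auto
  have tail: "\<delta> l = \<delta> k" if l: "l \<in> {k..n}" for l
  proof -
    have "l \<in> {1..n}" "x < l" "p l = p k" using l x' k flat by auto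
    from downstream_impartial_update[OF DI p x'(1) this(1) k this(2) x'(2) this(3)]
    show ?thesis unfolding \<delta>_def by simp
  qed
  have "0 = (\<Sum>l=1..n. \<delta> l)"
    using balanced p unfolding \<delta>_def by (simp add: sum_subtractf)
  also have "\<dots> = (\<Sum>l=1..<k. \<delta> l) + (\<Sum>l=k..n. \<delta> l)"
    using k by (simp add: sum.atLeastLessThan_concat flip: atLeastLessThanSuc_atLeastAtMost)
  also have "(\<Sum>l=1..<k. \<delta> l) = 0"
    using below p unfolding \<delta>_def by simp
  also have "(\<Sum>l=k..n. \<delta> l) = (\<Sum>l=k..n. \<delta> k)"
    by (rule sum.cong[OF refl tail])
  also have "\<dots> = real (Suc n - k) * \<delta> k"
    by simp
  finally have "\<delta> k = 0" using k by simp
  then show ?thesis unfolding \<delta>_def by simp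
qed

lemma downstream_impartial_balanced_flat_tail_eq:
  assumes DI: "downstream_impartial n D"
    and balanced: "\<forall>p\<in>dom_D n. (\<Sum>i=1..n. D p i) = 0"
    and below: "\<forall>p\<in>dom_D n. \<forall>j\<in>{1..<k}. D p j = 0"
    and k: "k \<in> {1..n}" and p: "p \<in> dom_D n" "p' \<in> dom_D n"
    and flat: "\<forall>j\<in>{k..n}. p j = c" "\<forall>j\<in>{k..n}. p' j = c"
  shows "D p k = D p' k"
proof (rule eq_by_coordinate_updates[where S = "{1..<k}" and P = "{p \<in> dom_D n. \<forall>j\<in>{k..n}. p j = c}"
      and Q = "\<lambda>p. D p k"])
  show "p(x := p' x) \<in> {p \<in> dom_D n. \<forall>j\<in>{k..n}. p j = c}"
    if "p \<in> {p \<in> dom_D n. \<forall>j\<in>{k..n}. p j = c}" "p' \<in> {p \<in> dom_D n. \<forall>j\<in>{k..n}. p j = c}"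
      "x \<in> {1..<k}" for p p' x
    using that k dom_D_update dom_D_nonneg by auto
  show "D (p(x := v)) k = D p k"
    if "p \<in> {p \<in> dom_D n. \<forall>j\<in>{k..n}. p j = c}" "p(x := v) \<in> {p \<in> dom_D n. \<forall>j\<in>{k..n}. p j = c}"
      "x \<in> {1..<k}" for p x v
    using downstream_impartial_balanced_update_eq[OF DI balanced below] that k by blast
  have "p j = p' j" if "j \<notin> {1..<k}" for j
  proof (cases "j \<in> {k..n}")
    case True
    then show ?thesis using flat by simp
  next
    case False
    then have "j \<notin> {1..n}" using that k by auto
    then show ?thesis using dom_D_outside[OF p(1)] dom_D_outside[OF p(2)] by simp
  qed
  then show "\<forall>j. j \<notin> {1..<k} \<longrightarrow> p j = p' j" by blast
qed (use p flat in auto)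

lemma balanced_axiomatic_rule_vanishes_step:
  assumes SI: "scale_invariant n D" and DI: "downstream_impartial n D"
    and UI: "upstream_invariant n D"
    and balanced: "\<forall>p\<in>dom_D n. (\<Sum>i=1..n. D p i) = 0"
    and at_source: "\<forall>p\<in>dom_D n. has_source n p \<longrightarrow> D p (source n p) = 0"
    and below: "\<forall>p\<in>dom_D n. \<forall>j\<in>{1..<k}. D p j = 0"
    and k: "k \<in> {1..n-1}" and e: "e \<in> dom_D n"
  shows "D e k = 0"
proof -
  define c where "c = e k"
  define q where "q j = (if j \<in> {k..n} then c else e j)" for j
  define q0 where "q0 j = (if j \<in> {k..n} then c else 0)" for j
  have k': "k \<in> {1..n}" using k by auto
  have c: "0 \<le> c" unfolding c_def by (rule dom_D_nonneg[OF e])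
  have q: "q \<in> dom_D n" and q0: "q0 \<in> dom_D n"
    using e c k' unfolding q_def q0_def dom_D_def by auto
  have "D e k = D q k"
    by (rule upstream_invariant_eq_if_eq_upto[OF UI e q k']) (simp add: q_def c_def)
  also have "\<dots> = D q0 k"
    by (rule downstream_impartial_balanced_flat_tail_eq[OF DI balanced below k' q q0, where c = c])
      (simp_all add: q_def q0_def)
  also have "\<dots> = 0"
  proof (cases "c = 0")
    case True
    then have "q0 = (\<lambda>_. 0)" by (simp add: q0_def fun_eq_iff)
    then show ?thesis using scale_invariant_zero[OF SI k'] by simp
  next
    case False
    have "0 < q0 k" "\<forall>j\<in>{1..<k}. q0 j = 0"
      using k' c False by (auto simp: q0_def)
    note source_q0 = source_eqI[OF k this]
    have "D q0 (source n q0) = 0" using at_source q0 source_q0(1) by blast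
    then show ?thesis unfolding source_q0(2) .
  qed
  finally show ?thesis .
qed

lemma balanced_axiomatic_rule_vanishes:
  assumes SI: "scale_invariant n D" and DI: "downstream_impartial n D"
    and UI: "upstream_invariant n D"
    and balanced: "\<forall>p\<in>dom_D n. (\<Sum>i=1..n. D p i) = 0"
    and at_source: "\<forall>p\<in>dom_D n. has_source n p \<longrightarrow> D p (source n p) = 0"
    and e: "e \<in> dom_D n" and k: "k \<in> {1..n}"
  shows "D e k = 0"
proof -
  have upstream: "\<forall>p\<in>dom_D n. D p k = 0" if "k \<in> {1..n-1}" for k
    using that
  proof (induction k rule: less_induct)
    case (less k)
    then have "\<forall>p\<in>dom_D n. \<forall>j\<in>{1..<k}. D p j = 0" by auto
    with less.prems show ?case
      using balanced_axiomatic_rule_vanishes_step[OF SI DI UI balanced at_source] by blast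
  qed
  show ?thesis
  proof (cases "k = n")
    case True
    obtain m where m: "n = Suc m" using k by (cases n) auto
    have "(\<Sum>i=1..n. D e i) = (\<Sum>i=1..m. D e i) + D e n"
      by (simp add: m)
    also have "(\<Sum>i=1..m. D e i) = 0"
      using upstream e m by simp
    finally show ?thesis using balanced e True by simp
  qed (use upstream e k in auto)
qed

definition unit_inflow_top :: "nat \<Rightarrow> real" where
  "unit_inflow_top i = (if i = 1 then 1 else 0)"

lemma unit_inflow_top_in_dom_D: "1 \<le> n \<Longrightarrow> unit_inflow_top \<in> dom_D n"
  by (simp add: unit_inflow_top_def dom_D_def)

lemma is_rule_sum:
  "is_rule n R \<Longrightarrow> e \<in> dom_D n \<Longrightarrow> (\<Sum>i=1..n. R e i) = (\<Sum>i=1..n. e i)"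
  unfolding is_rule_def is_allocation_def by blast

lemma is_rule_unit_inflow_top_share:
  assumes n: "2 \<le> n" and rule: "is_rule n R"
  shows "0 \<le> R unit_inflow_top 1" and "R unit_inflow_top 1 \<le> 1"
proof -
  have alloc: "is_allocation n unit_inflow_top (R unit_inflow_top)"
    using rule unit_inflow_top_in_dom_D n unfolding is_rule_def by simp
  then show "0 \<le> R unit_inflow_top 1"
    using n unfolding is_allocation_def by auto
  have "(1::nat) \<in> {1..n-1}" using n by simp
  with alloc have "(\<Sum>i=1..1. R unit_inflow_top i) \<le> (\<Sum>i=1..1. unit_inflow_top i)"
    unfolding is_allocation_def by blast
  then show "R unit_inflow_top 1 \<le> 1" by (simp add: unit_inflow_top_def)
qed

lemma R_at_source:
  assumes n: "2 \<le> n" and SI: "scale_invariant n R" and ET: "equal_treatment_source n R"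
    and e: "e \<in> dom_D n" "has_source n e"
  shows "R e (source n e) = R unit_inflow_top 1 * e (source n e)"
proof -
  define a where "a = e (source n e)"
  let ?u = unit_inflow_top
  have a: "0 < a" unfolding a_def by (rule source_pos[OF e(2)])
  have u: "?u \<in> dom_D n" using n by (simp add: unit_inflow_top_in_dom_D)
  have au: "(\<lambda>i. a * ?u i) \<in> dom_D n" using dom_D_scale[OF u] a by simp
  have "1 \<in> {1..n-1}" "0 < a * ?u 1" "\<forall>j\<in>{1..<1}. a * ?u j = 0"
    using n a by (auto simp: unit_inflow_top_def)
  note source_au = source_eqI[OF this]
  have "e (source n e) = a * ?u (source n (\<lambda>i. a * ?u i))"
    unfolding source_au(2) by (simp add: a_def unit_inflow_top_def)
  then have "R e (source n e) = R (\<lambda>i. a * ?u i) (source n (\<lambda>i. a * ?u i))"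
    by (rule equal_treatment_sourceD[OF ET e(1) au e(2) source_au(1)])
  also have "\<dots> = R ?u 1 * a"
    unfolding source_au(2) using scale_invariantD[OF SI u] a n by simp
  finally show ?thesis unfolding a_def .
qed

lemma compromise_rule_if_axioms:
  assumes n: "2 \<le> n" and rule: "is_rule n R"
    and SI: "scale_invariant n R" and DI: "downstream_impartial n R"
    and UI: "upstream_invariant n R" and ET: "equal_treatment_source n R"
  shows "compromise_rule n R"
proof -
  define lam where "lam = R unit_inflow_top 1"
  have "R e i - R_compromise n lam e i = 0" if "e \<in> dom_D n" "i \<in> {1..n}" for e i
  proof (rule balanced_axiomatic_rule_vanishes[OF _ _ _ _ _ that])
    show "scale_invariant n (\<lambda>e i. R e i - R_compromise n lam e i)"
      by (rule scale_invariant_diff[OF SI scale_invariant_R_compromise])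
    show "downstream_impartial n (\<lambda>e i. R e i - R_compromise n lam e i)"
      by (rule downstream_impartial_diff[OF DI downstream_impartial_R_compromise])
    show "upstream_invariant n (\<lambda>e i. R e i - R_compromise n lam e i)"
      by (rule upstream_invariant_diff[OF UI upstream_invariant_R_compromise])
    show "\<forall>p\<in>dom_D n. (\<Sum>i=1..n. R p i - R_compromise n lam p i) = 0"
      using is_rule_sum[OF rule] sum_R_compromise[of n lam] by (simp add: sum_subtractf)
    show "\<forall>p\<in>dom_D n. has_source n p \<longrightarrow> R p (source n p) - R_compromise n lam p (source n p) = 0"
      using R_at_source[OF n SI ET] R_compromise_source unfolding lam_def by simp
  qed
  then show ?thesis
    using is_rule_unit_inflow_top_share[OF n rule]
    unfolding compromise_rule_def R_compromise_def[symmetric] lam_def by force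
qed

theorem theorem2:
  fixes n :: nat and R :: "(nat \<Rightarrow> real) \<Rightarrow> (nat \<Rightarrow> real)"
  assumes "2 \<le> n" and "is_rule n R"
  shows "(scale_invariant n R \<and> downstream_impartial n R \<and> upstream_invariant n R
          \<and> equal_treatment_source n R) \<longleftrightarrow> compromise_rule n R"
proof
  assume "scale_invariant n R \<and> downstream_impartial n R \<and> upstream_invariant n R
          \<and> equal_treatment_source n R"
  then show "compromise_rule n R" using compromise_rule_if_axioms[OF assms] by blast
next
  assume "compromise_rule n R"
  then obtain lam where "\<forall>e\<in>dom_D n. \<forall>i\<in>{1..n}. R e i = R_compromise n lam e i"
    unfolding compromise_rule_def R_compromise_def by blast
  note axioms_agree = rule_axioms_cong[OF this]
  show "scale_invariant n R \<and> downstream_impartial n R \<and> upstream_invariant n R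
          \<and> equal_treatment_source n R"
    unfolding axioms_agree
    using scale_invariant_R_compromise downstream_impartial_R_compromise
      upstream_invariant_R_compromise equal_treatment_source_R_compromise by blast
qed

end
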